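(* Let $(X,d)$ be a locally compact metric space with a flow $\pi$ and let $M$ be a compact subset of $X$. Then $\Omega(M)$ is quasi-attracting, i.e. $\Omega(M)$ is a closed set which is an intersection of attracting sets.
   Context: A flow is a continuous map $\pi: X\times\mathbb{R}\to X$ with $\pi(x,0)=x$ and $\pi(\pi(x,t),s)=\pi(x,t+s)$; write $x\cdot t=\pi(x,t)$ and $Y\cdot T=\{y\cdot s: y\in Y, s\in T\}$. A set $Y$ is positively invariant if $Y\cdot\mathbb{R}^+=Y$. For $Y\subseteq X$, $\omega(Y)=\bigcap_{t\ge0}\overline{Y\cdot[t,\infty)}$. A positively invariant closed set $A\subseteq X$ is an attracting set if there is a neighborhood $U$ of $A$ with $\omega(U)\subseteq A$; a closed set which is an intersection of attracting sets is a quasi-attracting set. For $x,y\in X$ and $\varepsilon,t>0$, an $(\varepsilon,t)$-chain from $x$ to $y$ is a pair of finite sequences $x=x_1,\dots,x_{n+1}=y$ in $X$ and $t_1,\dots,t_n$ in $\mathbb{R}^+$ with $t_i\ge t$ and $d(x_i\cdot t_i,x_{i+1})\le\varepsilon$ for all $i$. $\Omega(x)$ is the set of $y$ such that for every $\varepsilon,t>0$ there is an $(\varepsilon,t)$-chain from $x$ to $y$, and $\Omega(M)=\bigcup_{x\in M}\Omega(x)$. *)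

theory Defs
  imports "HOL-Analysis.Analysis"
begin

definition is_flow :: "('a::topological_space \<Rightarrow> real \<Rightarrow> 'a) \<Rightarrow> bool" where
  "is_flow \<pi> \<longleftrightarrow> continuous_on UNIV (\<lambda>(x, t). \<pi> x t) \<and>
     (\<forall>x. \<pi> x 0 = x) \<and> (\<forall>x t s. \<pi> (\<pi> x t) s = \<pi> x (t + s))"

definition flow_image :: "('a \<Rightarrow> real \<Rightarrow> 'a) \<Rightarrow> 'a set \<Rightarrow> real set \<Rightarrow> 'a set" where
  "flow_image \<pi> Y T = {\<pi> y s | y s. y \<in> Y \<and> s \<in> T}"

definition pos_invariant :: "('a \<Rightarrow> real \<Rightarrow> 'a) \<Rightarrow> 'a set \<Rightarrow> bool" where
  "pos_invariant \<pi> Y \<longleftrightarrow> flow_image \<pi> Y {0..} = Y"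

definition omega_limit :: "('a::topological_space \<Rightarrow> real \<Rightarrow> 'a) \<Rightarrow> 'a set \<Rightarrow> 'a set" where
  "omega_limit \<pi> Y = (\<Inter>t\<in>{0..}. closure (flow_image \<pi> Y {t..}))"

definition attracting_set :: "('a::topological_space \<Rightarrow> real \<Rightarrow> 'a) \<Rightarrow> 'a set \<Rightarrow> bool" where
  "attracting_set \<pi> A \<longleftrightarrow> pos_invariant \<pi> A \<and> closed A \<and>
     (\<exists>U. A \<subseteq> interior U \<and> omega_limit \<pi> U \<subseteq> A)"

definition quasi_attracting :: "('a::topological_space \<Rightarrow> real \<Rightarrow> 'a) \<Rightarrow> 'a set \<Rightarrow> bool" where
  "quasi_attracting \<pi> A \<longleftrightarrow> closed A \<and>
     (\<exists>\<A>. (\<forall>B\<in>\<A>. attracting_set \<pi> B) \<and> A = \<Inter>\<A>)"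

definition chain :: "('a::metric_space \<Rightarrow> real \<Rightarrow> 'a) \<Rightarrow> real \<Rightarrow> real \<Rightarrow> 'a \<Rightarrow> 'a \<Rightarrow> bool" where
  "chain \<pi> \<epsilon> t x y \<longleftrightarrow> (\<exists>n::nat. \<exists>xs ts. n \<ge> 1 \<and> xs 0 = x \<and> xs n = y \<and>
     (\<forall>i<n. ts i \<ge> 0 \<and> ts i \<ge> t \<and> dist (\<pi> (xs i) (ts i)) (xs (Suc i)) \<le> \<epsilon>))"

definition chain_limit :: "('a::metric_space \<Rightarrow> real \<Rightarrow> 'a) \<Rightarrow> 'a \<Rightarrow> 'a set" where
  "chain_limit \<pi> x = {y. \<forall>\<epsilon>>0. \<forall>t>0. chain \<pi> \<epsilon> t x y}"

definition chain_limit_set :: "('a::metric_space \<Rightarrow> real \<Rightarrow> 'a) \<Rightarrow> 'a set \<Rightarrow> 'a set" where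
  "chain_limit_set \<pi> M = (\<Union>x\<in>M. chain_limit \<pi> x)"

end

theory Submission
  imports Defs
begin

text \<open>Let \<open>y \<notin> \<Omega>(M)\<close>. Compactness of \<open>M\<close> and continuity of the flow make the failure of chains
  uniform: for some \<open>\<epsilon>, t > 0\<close> no \<open>(\<epsilon>,t)\<close>-chain runs from a point of \<open>M\<close> to \<open>y\<close>. Let \<open>P\<close> be the set
  of endpoints of \<open>(\<epsilon>,t)\<close>-chains starting in \<open>M\<close>. Any point within \<open>\<epsilon>/2\<close> of a point of
  \<open>closure (P\<cdot>[t,\<infinity>))\<close> is such an endpoint, so \<open>\<omega>(P) \<subseteq> interior P\<close>: hence \<open>\<omega>(P)\<close> is an attracting
  set with neighbourhood \<open>P\<close>. It contains \<open>\<Omega>(M)\<close> and, being inside \<open>P\<close>, misses \<open>y\<close>.\<close>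

lemma is_flow_add: "is_flow \<pi> \<Longrightarrow> \<pi> (\<pi> x t) s = \<pi> x (t + s)"
  unfolding is_flow_def by blast

lemma is_flow_continuous_on_slice:
  assumes "is_flow \<pi>"
  shows "continuous_on UNIV (\<lambda>x. \<pi> x t)"
proof -
  have "continuous_on UNIV (\<lambda>(x, t). \<pi> x t)"
    using assms unfolding is_flow_def by blast
  then have "continuous_on UNIV ((\<lambda>(x, t). \<pi> x t) \<circ> (\<lambda>x. (x, t)))"
    by (intro continuous_on_compose continuous_intros) (auto intro: continuous_on_subset)
  then show ?thesis by (simp add: o_def)
qed

lemma flow_image_iff: "w \<in> flow_image \<pi> P T \<longleftrightarrow> (\<exists>p s. p \<in> P \<and> s \<in> T \<and> w = \<pi> p s)"
  unfolding flow_image_def by blast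

inductive chain_rel :: "('a::metric_space \<Rightarrow> real \<Rightarrow> 'a) \<Rightarrow> real \<Rightarrow> real \<Rightarrow> 'a \<Rightarrow> 'a \<Rightarrow> bool"
  for \<pi> \<epsilon> t where
  single: "0 \<le> s \<Longrightarrow> t \<le> s \<Longrightarrow> dist (\<pi> x s) y \<le> \<epsilon> \<Longrightarrow> chain_rel \<pi> \<epsilon> t x y"
| step: "0 \<le> s \<Longrightarrow> t \<le> s \<Longrightarrow> dist (\<pi> x s) w \<le> \<epsilon> \<Longrightarrow> chain_rel \<pi> \<epsilon> t w y \<Longrightarrow> chain_rel \<pi> \<epsilon> t x y"

lemma chain_rel_of_steps:
  assumes "n \<ge> 1" and "\<forall>i<n. ts i \<ge> 0 \<and> ts i \<ge> t \<and> dist (\<pi> (xs i) (ts i)) (xs (Suc i)) \<le> \<epsilon>"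
  shows "chain_rel \<pi> \<epsilon> t (xs 0) (xs n)"
  using assms
proof (induction n arbitrary: xs ts)
  case 0
  then show ?case by simp
next
  case (Suc m)
  show ?case
  proof (cases "m = 0")
    case True
    then show ?thesis using Suc.prems(2) by (auto intro: chain_rel.single)
  next
    case False
    then have "chain_rel \<pi> \<epsilon> t (xs (Suc 0)) (xs (Suc m))"
      using Suc.IH[of "\<lambda>i. ts (Suc i)" "\<lambda>i. xs (Suc i)"] Suc.prems(2) by auto
    then show ?thesis using Suc.prems(2) by (auto intro: chain_rel.step)
  qed
qed

lemma chain_of_chain_rel: "chain_rel \<pi> \<epsilon> t x y \<Longrightarrow> chain \<pi> \<epsilon> t x y"
proof (induction rule: chain_rel.induct)
  case (single s x y)
  then show ?case unfolding chain_def
    by (intro exI[of _ 1] exI[of _ "\<lambda>i. if i = 0 then x else y"] exI[of _ "\<lambda>_. s"]) auto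
next
  case (step s x w y)
  then obtain n xs ts where h: "n \<ge> 1" "xs 0 = w" "xs n = y"
    "\<forall>i<n. ts i \<ge> 0 \<and> ts i \<ge> t \<and> dist (\<pi> (xs i) (ts i)) (xs (Suc i)) \<le> \<epsilon>"
    unfolding chain_def by blast
  have "\<forall>i<Suc n. case_nat s ts i \<ge> 0 \<and> case_nat s ts i \<ge> t \<and>
     dist (\<pi> (case_nat x xs i) (case_nat s ts i)) (case_nat x xs (Suc i)) \<le> \<epsilon>"
    using h step.hyps by (auto split: nat.split)
  then show ?case unfolding chain_def
    by (intro exI[of _ "Suc n"] exI[of _ "case_nat x xs"] exI[of _ "case_nat s ts"]) (use h in auto)
qed

lemma chain_iff_chain_rel: "chain \<pi> \<epsilon> t x y \<longleftrightarrow> chain_rel \<pi> \<epsilon> t x y"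
  by (metis chain_def chain_of_chain_rel chain_rel_of_steps)

lemma chain_rel_mono:
  "chain_rel \<pi> \<epsilon> t x y \<Longrightarrow> \<epsilon> \<le> \<epsilon>' \<Longrightarrow> t' \<le> t \<Longrightarrow> chain_rel \<pi> \<epsilon>' t' x y"
proof (induction rule: chain_rel.induct)
  case (single s x y)
  then show ?case by (intro chain_rel.single[of s]) auto
next
  case (step s x w y)
  then show ?case by (meson chain_rel.step order_trans)
qed

lemma chain_rel_snoc:
  "chain_rel \<pi> \<epsilon> t x z \<Longrightarrow> 0 \<le> s \<Longrightarrow> t \<le> s \<Longrightarrow> dist (\<pi> z s) w \<le> \<epsilon> \<Longrightarrow> chain_rel \<pi> \<epsilon> t x w"
  by (induction rule: chain_rel.induct) (meson chain_rel.intros)+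

lemma chain_rel_last_step:
  "chain_rel \<pi> \<epsilon> t x y \<Longrightarrow>
     \<exists>p s. (p = x \<or> chain_rel \<pi> \<epsilon> t x p) \<and> 0 \<le> s \<and> t \<le> s \<and> dist (\<pi> p s) y \<le> \<epsilon>"
proof (induction rule: chain_rel.induct)
  case (single s x y)
  then show ?case by blast
next
  case (step s x w y)
  then show ?case by (meson chain_rel.intros)
qed

text \<open>A chain with minimal time \<open>2t\<close> leaves room to splice in a first step of time \<open>t\<close> from a
  nearby starting point.\<close>
lemma chain_rel_change_start:
  assumes flow: "is_flow \<pi>" and "chain_rel \<pi> \<epsilon> (2*t) x' z" and "t > 0"
    and "dist (\<pi> x t) (\<pi> x' t) \<le> \<epsilon>"
  shows "chain_rel \<pi> \<epsilon> t x z"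
proof -
  have "chain_rel \<pi> \<epsilon> t (\<pi> x' t) z"
    using assms(2)
  proof (cases rule: chain_rel.cases)
    case (single s)
    then have "dist (\<pi> (\<pi> x' t) (s - t)) z \<le> \<epsilon>" "0 \<le> s - t" "t \<le> s - t"
      using assms(3) is_flow_add[OF flow] by auto
    then show ?thesis by (rule chain_rel.single[rotated 2])
  next
    case (step s w)
    have "chain_rel \<pi> \<epsilon> t w z" using step(4) by (rule chain_rel_mono) (use assms(3) in auto)
    moreover have "dist (\<pi> (\<pi> x' t) (s - t)) w \<le> \<epsilon>" "0 \<le> s - t" "t \<le> s - t"
      using step assms(3) is_flow_add[OF flow] by auto
    ultimately show ?thesis by (meson chain_rel.step)
  qed
  then show ?thesis using assms(3,4) by (meson chain_rel.step less_imp_le order_refl)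
qed

lemma chain_limit_of_tendsto_starts:
  assumes flow: "is_flow \<pi>" and lim: "x \<longlonglongrightarrow> l"
    and chains: "\<And>\<epsilon> t. \<epsilon> > 0 \<Longrightarrow> t > 0 \<Longrightarrow> eventually (\<lambda>k. chain_rel \<pi> \<epsilon> t (x k) y) sequentially"
  shows "y \<in> chain_limit \<pi> l"
  unfolding chain_limit_def mem_Collect_eq chain_iff_chain_rel
proof (intro allI impI)
  fix \<epsilon> t :: real
  assume \<epsilon>: "\<epsilon> > 0" and t: "t > 0"
  have "isCont (\<lambda>x. \<pi> x t) l"
    using is_flow_continuous_on_slice[OF flow] continuous_on_eq_continuous_at by blast
  then have "(\<lambda>k. \<pi> (x k) t) \<longlonglongrightarrow> \<pi> l t"
    using isCont_tendsto_compose lim by blast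
  then have "eventually (\<lambda>k. dist (\<pi> l t) (\<pi> (x k) t) < \<epsilon>) sequentially"
    using \<epsilon> by (subst dist_commute) (rule tendstoD)
  moreover have "eventually (\<lambda>k. chain_rel \<pi> \<epsilon> (2*t) (x k) y) sequentially"
    using chains \<epsilon> t by simp
  ultimately have "eventually (\<lambda>k. dist (\<pi> l t) (\<pi> (x k) t) < \<epsilon> \<and> chain_rel \<pi> \<epsilon> (2*t) (x k) y)
      sequentially"
    by (rule eventually_conj)
  then obtain k where "dist (\<pi> l t) (\<pi> (x k) t) < \<epsilon>" "chain_rel \<pi> \<epsilon> (2*t) (x k) y"
    unfolding eventually_sequentially by blast
  then show "chain_rel \<pi> \<epsilon> t l y"
    using chain_rel_change_start[OF flow _ t] by simp
qed

lemma not_in_chain_limit_set_uniform: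
  assumes flow: "is_flow \<pi>" and "compact M" and y: "y \<notin> chain_limit_set \<pi> M"
  shows "\<exists>\<epsilon>>0. \<exists>t>0. \<forall>x\<in>M. \<not> chain_rel \<pi> \<epsilon> t x y"
proof (rule ccontr)
  assume "\<not> ?thesis"
  then have some_chain: "\<exists>x\<in>M. chain_rel \<pi> \<epsilon> t x y" if "\<epsilon> > 0" "t > 0" for \<epsilon> t
    using that by blast
  have "\<forall>k::nat. \<exists>x. x \<in> M \<and> chain_rel \<pi> (1 / (real k + 1)) (real k + 1) x y"
  proof
    fix k :: nat
    have "1 / (real k + 1) > 0" "real k + 1 > 0" by auto
    then show "\<exists>x. x \<in> M \<and> chain_rel \<pi> (1 / (real k + 1)) (real k + 1) x y"
      using some_chain by blast
  qed
  then obtain f where "\<forall>k. f k \<in> M \<and> chain_rel \<pi> (1 / (real k + 1)) (real k + 1) (f k) y"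
    by (rule choice[THEN exE])
  then have f: "\<And>k. f k \<in> M" "\<And>k. chain_rel \<pi> (1 / (real k + 1)) (real k + 1) (f k) y"
    by blast+
  have "\<exists>l\<in>M. \<exists>r. strict_mono r \<and> (f \<circ> r) \<longlonglongrightarrow> l"
    using compact_imp_seq_compact[OF \<open>compact M\<close>] f(1) unfolding seq_compact_def by blast
  then obtain l r where l: "l \<in> M" "strict_mono r" "(f \<circ> r) \<longlonglongrightarrow> l"
    by blast
  have "y \<in> chain_limit \<pi> l"
  proof (rule chain_limit_of_tendsto_starts[OF flow l(3)])
    fix \<epsilon> t :: real
    assume "\<epsilon> > 0" "t > 0"
    define N where "N = nat \<lceil>max t (1/\<epsilon>)\<rceil>"
    have "t \<le> real N" "1/\<epsilon> \<le> real N"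
      unfolding N_def by linarith+
    then have N: "t \<le> real N + 1" "1 / (real N + 1) \<le> \<epsilon>"
      using \<open>\<epsilon> > 0\<close> by (auto simp: field_simps)
    have "chain_rel \<pi> \<epsilon> t ((f \<circ> r) k) y" if "k \<ge> N" for k
    proof -
      have "real N \<le> real (r k)" using seq_suble[OF l(2), of k] that by simp
      then have "1 / (real (r k) + 1) \<le> 1 / (real N + 1)"
        by (simp add: frac_le)
      then have "1 / (real (r k) + 1) \<le> \<epsilon>" "t \<le> real (r k) + 1"
        using N \<open>real N \<le> real (r k)\<close> by linarith+
      then show ?thesis using chain_rel_mono[OF f(2)] by simp
    qed
    then show "eventually (\<lambda>k. chain_rel \<pi> \<epsilon> t ((f \<circ> r) k) y) sequentially"
      using eventually_sequentially by blast
  qed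
  then show False using y l(1) unfolding chain_limit_set_def by blast
qed

lemma closed_omega_limit: "closed (omega_limit \<pi> P)"
  unfolding omega_limit_def by (intro closed_INT) auto

lemma omega_limit_subset_closure_flow_image:
  "t \<ge> 0 \<Longrightarrow> omega_limit \<pi> P \<subseteq> closure (flow_image \<pi> P {t..})"
  unfolding omega_limit_def by auto

lemma flow_after_flow_image_subset:
  assumes "is_flow \<pi>" and "r \<ge> 0"
  shows "(\<lambda>z. \<pi> z r) ` flow_image \<pi> P {s..} \<subseteq> flow_image \<pi> P {s..}"
proof
  fix q assume "q \<in> (\<lambda>z. \<pi> z r) ` flow_image \<pi> P {s..}"
  then obtain z where "z \<in> flow_image \<pi> P {s..}" "q = \<pi> z r"
    by blast
  then obtain p u where "p \<in> P" "s \<le> u" "q = \<pi> (\<pi> p u) r"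
    unfolding flow_image_iff by auto
  then show "q \<in> flow_image \<pi> P {s..}"
    using assms is_flow_add[OF assms(1)] unfolding flow_image_iff
    by (intro exI[of _ p] exI[of _ "u + r"]) auto
qed

lemma pos_invariant_omega_limit:
  assumes flow: "is_flow \<pi>"
  shows "pos_invariant \<pi> (omega_limit \<pi> P)"
  unfolding pos_invariant_def
proof
  show "flow_image \<pi> (omega_limit \<pi> P) {0..} \<subseteq> omega_limit \<pi> P"
  proof
    fix w assume "w \<in> flow_image \<pi> (omega_limit \<pi> P) {0..}"
    then obtain a r where a: "a \<in> omega_limit \<pi> P" "r \<ge> 0" "w = \<pi> a r"
      unfolding flow_image_iff by auto
    have "w \<in> closure (flow_image \<pi> P {s..})" if "s \<ge> 0" for s
    proof -
      have "(\<lambda>z. \<pi> z r) ` flow_image \<pi> P {s..} \<subseteq> closure (flow_image \<pi> P {s..})"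
        using flow_after_flow_image_subset[OF flow a(2)] closure_subset by blast
      then have "(\<lambda>z. \<pi> z r) ` closure (flow_image \<pi> P {s..}) \<subseteq> closure (flow_image \<pi> P {s..})"
        by (intro image_closure_subset continuous_on_subset[OF is_flow_continuous_on_slice[OF flow]])
          auto
      then show ?thesis
        using a omega_limit_subset_closure_flow_image[OF that] by blast
    qed
    then show "w \<in> omega_limit \<pi> P" unfolding omega_limit_def by auto
  qed
next
  show "omega_limit \<pi> P \<subseteq> flow_image \<pi> (omega_limit \<pi> P) {0..}"
  proof
    fix a assume "a \<in> omega_limit \<pi> P"
    moreover have "\<pi> a 0 = a" using flow unfolding is_flow_def by simp
    ultimately show "a \<in> flow_image \<pi> (omega_limit \<pi> P) {0..}"
      unfolding flow_image_iff by (intro exI[of _ a] exI[of _ 0]) auto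
  qed
qed

definition chain_reach :: "('a::metric_space \<Rightarrow> real \<Rightarrow> 'a) \<Rightarrow> real \<Rightarrow> real \<Rightarrow> 'a set \<Rightarrow> 'a set" where
  "chain_reach \<pi> \<epsilon> t M = {z. \<exists>x\<in>M. chain_rel \<pi> \<epsilon> t x z}"

lemma closure_flow_image_chain_reach_subset_interior:
  assumes "\<epsilon> > 0" and "t \<ge> 0"
  shows "closure (flow_image \<pi> (chain_reach \<pi> \<epsilon> t M) {t..}) \<subseteq> interior (chain_reach \<pi> \<epsilon> t M)"
proof
  fix z assume "z \<in> closure (flow_image \<pi> (chain_reach \<pi> \<epsilon> t M) {t..})"
  then obtain w where "w \<in> flow_image \<pi> (chain_reach \<pi> \<epsilon> t M) {t..}" "dist w z < \<epsilon>/2"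
    unfolding closure_approachable using \<open>\<epsilon> > 0\<close> half_gt_zero by blast
  then obtain p u x where "dist (\<pi> p u) z < \<epsilon>/2" "t \<le> u" "x \<in> M" "chain_rel \<pi> \<epsilon> t x p"
    unfolding flow_image_iff chain_reach_def by auto
  have "ball z (\<epsilon>/2) \<subseteq> chain_reach \<pi> \<epsilon> t M"
  proof
    fix q assume "q \<in> ball z (\<epsilon>/2)"
    then have "dist (\<pi> p u) q \<le> \<epsilon>"
      using \<open>dist (\<pi> p u) z < \<epsilon>/2\<close> dist_triangle[of "\<pi> p u" q z] by (simp add: dist_commute)
    moreover have "0 \<le> u" using \<open>t \<le> u\<close> \<open>t \<ge> 0\<close> by linarith
    ultimately have "chain_rel \<pi> \<epsilon> t x q"
      using chain_rel_snoc \<open>chain_rel \<pi> \<epsilon> t x p\<close> \<open>t \<le> u\<close> by blast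
    then show "q \<in> chain_reach \<pi> \<epsilon> t M"
      unfolding chain_reach_def using \<open>x \<in> M\<close> by blast
  qed
  then show "z \<in> interior (chain_reach \<pi> \<epsilon> t M)"
    using \<open>\<epsilon> > 0\<close> by (meson centre_in_ball half_gt_zero interior_maximal open_ball subsetD)
qed

lemma omega_limit_chain_reach_subset_interior:
  "\<epsilon> > 0 \<Longrightarrow> t \<ge> 0 \<Longrightarrow> omega_limit \<pi> (chain_reach \<pi> \<epsilon> t M) \<subseteq> interior (chain_reach \<pi> \<epsilon> t M)"
  using omega_limit_subset_closure_flow_image closure_flow_image_chain_reach_subset_interior
  by blast

lemma attracting_set_omega_limit_chain_reach:
  "is_flow \<pi> \<Longrightarrow> \<epsilon> > 0 \<Longrightarrow> t \<ge> 0 \<Longrightarrow> attracting_set \<pi> (omega_limit \<pi> (chain_reach \<pi> \<epsilon> t M))"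
  unfolding attracting_set_def
  using closed_omega_limit pos_invariant_omega_limit omega_limit_chain_reach_subset_interior
  by blast

lemma chain_limit_set_subset_omega_limit_chain_reach:
  assumes flow: "is_flow \<pi>" and "\<epsilon> > 0" and "t > 0"
  shows "chain_limit_set \<pi> M \<subseteq> omega_limit \<pi> (chain_reach \<pi> \<epsilon> t M)"
proof
  fix z assume "z \<in> chain_limit_set \<pi> M"
  then obtain x where x: "x \<in> M" "z \<in> chain_limit \<pi> x" unfolding chain_limit_set_def by blast
  have "\<exists>w\<in>flow_image \<pi> (chain_reach \<pi> \<epsilon> t M) {s..}. dist w z < \<delta>" if "s \<ge> 0" "\<delta> > 0" for s \<delta>
  proof -
    define \<delta>' where "\<delta>' = min (\<delta>/2) \<epsilon>"
    have \<delta>': "\<delta>' > 0" "\<delta>' < \<delta>" "\<delta>' \<le> \<epsilon>" unfolding \<delta>'_def using that assms by auto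
    have "chain_rel \<pi> \<delta>' (s + t) x z"
      using x(2) \<delta>' that assms unfolding chain_limit_def chain_iff_chain_rel by auto
    then obtain p u where pu: "p = x \<or> chain_rel \<pi> \<delta>' (s + t) x p" "s + t \<le> u" "dist (\<pi> p u) z \<le> \<delta>'"
      using chain_rel_last_step by blast
    \<comment> \<open>Cut the last step at time \<open>t\<close>: \<open>\<pi> p t\<close> is reached from \<open>x\<close> by an \<open>(\<epsilon>,t)\<close>-chain.\<close>
    have "chain_rel \<pi> \<epsilon> t x (\<pi> p t)"
    proof (cases "p = x")
      case True
      then show ?thesis using assms by (intro chain_rel.single[of t]) auto
    next
      case False
      then have "chain_rel \<pi> \<epsilon> t x p"
        using pu(1) \<delta>' that by (auto elim: chain_rel_mono)
      then show ?thesis using chain_rel_snoc[of \<pi> \<epsilon> t x p t "\<pi> p t"] assms by simp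
    qed
    then have "\<pi> (\<pi> p t) (u - t) \<in> flow_image \<pi> (chain_reach \<pi> \<epsilon> t M) {s..}"
      using x(1) pu(2) unfolding flow_image_iff chain_reach_def
      by (intro exI[of _ "\<pi> p t"] exI[of _ "u - t"]) auto
    then show ?thesis using is_flow_add[OF flow] pu(3) \<delta>' by force
  qed
  then show "z \<in> omega_limit \<pi> (chain_reach \<pi> \<epsilon> t M)"
    by (auto simp: omega_limit_def closure_approachable)
qed

theorem theorem3p6:
  fixes \<pi> :: "'a::metric_space \<Rightarrow> real \<Rightarrow> 'a" and M :: "'a set"
  assumes "locally compact (UNIV :: 'a set)"
    and "is_flow \<pi>"
    and "compact M"
  shows "quasi_attracting \<pi> (chain_limit_set \<pi> M)"
proof -
  define \<A> where "\<A> = {B. attracting_set \<pi> B \<and> chain_limit_set \<pi> M \<subseteq> B}"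
  have "y \<notin> \<Inter>\<A>" if y: "y \<notin> chain_limit_set \<pi> M" for y
  proof -
    obtain \<epsilon> t where "\<epsilon> > 0" "t > 0" "\<forall>x\<in>M. \<not> chain_rel \<pi> \<epsilon> t x y"
      using not_in_chain_limit_set_uniform[OF assms(2,3) y] by blast
    define B where "B = omega_limit \<pi> (chain_reach \<pi> \<epsilon> t M)"
    have "attracting_set \<pi> B"
      unfolding B_def using attracting_set_omega_limit_chain_reach[OF assms(2) \<open>\<epsilon> > 0\<close>] \<open>t > 0\<close>
      by simp
    moreover have "chain_limit_set \<pi> M \<subseteq> B"
      unfolding B_def by (rule chain_limit_set_subset_omega_limit_chain_reach[OF assms(2) \<open>\<epsilon> > 0\<close> \<open>t > 0\<close>])
    moreover have "B \<subseteq> chain_reach \<pi> \<epsilon> t M"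
      unfolding B_def using omega_limit_chain_reach_subset_interior[OF \<open>\<epsilon> > 0\<close>] \<open>t > 0\<close> interior_subset
      by (meson less_imp_le order_trans)
    moreover have "y \<notin> chain_reach \<pi> \<epsilon> t M"
      unfolding chain_reach_def using \<open>\<forall>x\<in>M. \<not> chain_rel \<pi> \<epsilon> t x y\<close> by blast
    ultimately show ?thesis unfolding \<A>_def by blast
  qed
  then have "chain_limit_set \<pi> M = \<Inter>\<A>" unfolding \<A>_def by blast
  moreover have "closed (\<Inter>\<A>)" unfolding \<A>_def attracting_set_def by (intro closed_Inter) blast
  moreover have "\<forall>B\<in>\<A>. attracting_set \<pi> B" unfolding \<A>_def by blast
  ultimately show ?thesis unfolding quasi_attracting_def by (intro conjI exI[of _ \<A>]) simp_all
qed

end
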